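(* Let $\mu\ge1$. The language of pairs $(A,B)$ of sequences in $\{0,\dots,\mu\}^\omega$ (read synchronously as words over $\{0,\dots,\mu\}^2$) with $\mathrm{PLA}(A)\ge\mathrm{PLA}(B)$ is $\omega$-context-free, i.e. it is accepted by a B\"uchi pushdown automaton.
   Context: $\mathrm{Sum}(M[0,n-1])=\sum_{j=0}^{n-1}M[j]$. Prefix-average comparison: $\mathrm{PLA}(A)\ge\mathrm{PLA}(B)$ holds iff there are only finitely many indices $i$ with $\mathrm{Sum}(B[0,i-1])\ge\mathrm{Sum}(A[0,i-1])$ and infinitely many indices $i$ with $\mathrm{Sum}(A[0,i-1])>\mathrm{Sum}(B[0,i-1])$. A B\"uchi pushdown automaton is a finite-state automaton with a stack (finite stack alphabet, start symbol, transitions possibly on $\epsilon$ that read the top stack symbol and replace it), accepting an infinite word iff some run visits an accepting state infinitely often. *)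

theory Defs
  imports Main
begin

definition prefix_sum :: "(nat \<Rightarrow> nat) \<Rightarrow> nat \<Rightarrow> nat" where
  "prefix_sum M i = (\<Sum>j<i. M j)"

definition PLA_ge :: "(nat \<Rightarrow> nat) \<Rightarrow> (nat \<Rightarrow> nat) \<Rightarrow> bool" where
  "PLA_ge A B \<longleftrightarrow>
     finite {i. prefix_sum B i \<ge> prefix_sum A i} \<and>
     infinite {i. prefix_sum A i > prefix_sum B i}"

text \<open>A transition (p, x, Z, q, \<gamma>) means: in state p, reading x (None = epsilon) with
  top stack symbol Z, go to state q and replace Z by the word \<gamma> (head = new top).\<close>
type_synonym 'a pda_trans = "nat \<times> 'a option \<times> nat \<times> nat \<times> nat list"

definition pda_wf ::
  "nat set \<Rightarrow> nat set \<Rightarrow> 'a pda_trans set \<Rightarrow> nat \<Rightarrow> nat \<Rightarrow> nat set \<Rightarrow> bool" where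
  "pda_wf Q \<Gamma> \<delta> q0 Z0 F \<longleftrightarrow>
     finite Q \<and> finite \<Gamma> \<and> finite \<delta> \<and> q0 \<in> Q \<and> Z0 \<in> \<Gamma> \<and> F \<subseteq> Q \<and>
     (\<forall>(p, x, Z, q, \<gamma>) \<in> \<delta>. p \<in> Q \<and> Z \<in> \<Gamma> \<and> q \<in> Q \<and> set \<gamma> \<subseteq> \<Gamma>)"

text \<open>One step of a run on the infinite word w: configurations (state, stack, number of
  input letters read so far).\<close>
definition pda_step ::
  "'a pda_trans set \<Rightarrow> (nat \<Rightarrow> 'a) \<Rightarrow> nat \<times> nat list \<times> nat \<Rightarrow> nat \<times> nat list \<times> nat \<Rightarrow> bool" where
  "pda_step \<delta> w c c' \<longleftrightarrow>
     (case c of (p, stk, n) \<Rightarrow> case c' of (q, stk', n') \<Rightarrow>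
       (\<exists>Z rest \<gamma>. stk = Z # rest \<and> stk' = \<gamma> @ rest \<and>
          (((p, None, Z, q, \<gamma>) \<in> \<delta> \<and> n' = n) \<or>
           ((p, Some (w n), Z, q, \<gamma>) \<in> \<delta> \<and> n' = Suc n))))"

definition pda_buchi_accepts ::
  "'a pda_trans set \<Rightarrow> nat \<Rightarrow> nat \<Rightarrow> nat set \<Rightarrow> (nat \<Rightarrow> 'a) \<Rightarrow> bool" where
  "pda_buchi_accepts \<delta> q0 Z0 F w \<longleftrightarrow>
     (\<exists>r :: nat \<Rightarrow> nat \<times> nat list \<times> nat.
        r 0 = (q0, [Z0], 0) \<and>
        (\<forall>i. pda_step \<delta> w (r i) (r (Suc i))) \<and>
        (\<forall>m. \<exists>i. snd (snd (r i)) \<ge> m) \<and>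
        infinite {i. fst (r i) \<in> F})"

definition omega_context_free :: "(nat \<Rightarrow> 'a) set \<Rightarrow> bool" where
  "omega_context_free L \<longleftrightarrow>
     (\<exists>Q \<Gamma> \<delta> q0 Z0 F. pda_wf Q \<Gamma> (\<delta> :: 'a pda_trans set) q0 Z0 F \<and>
        L = {w. pda_buchi_accepts \<delta> q0 Z0 F w})"

end

theory Submission
  imports Defs
begin

text \<open>
  Writing \<open>d\<^sub>i\<close> for the lead \<open>Sum(A[0,i-1]) - Sum(B[0,i-1])\<close>, the relation
  \<open>PLA(A) \<ge> PLA(B)\<close> says precisely that \<open>d\<^sub>i \<ge> 1\<close> for all large \<open>i\<close>. Since each letter
  changes the lead by at most \<open>\<mu>\<close>, a pushdown automaton can track it exactly without
  \<open>\<epsilon>\<close>-moves: a bounded residue \<open>c\<close> is kept in the state and the rest as a unary stack of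
  blocks worth \<open>+\<mu>\<close> or \<open>-\<mu>\<close>, normalised so that \<open>c \<ge> 1\<close> iff \<open>d \<ge> 1\<close>. The automaton
  nondeterministically guesses the moment from which the lead stays positive, switches to
  an accepting copy of its states, and from then on only has moves that keep \<open>c \<ge> 1\<close>.
\<close>

definition lead :: "(nat \<Rightarrow> nat \<times> nat) \<Rightarrow> nat \<Rightarrow> int" where
  "lead w i = int (prefix_sum (\<lambda>i. fst (w i)) i) - int (prefix_sum (\<lambda>i. snd (w i)) i)"

lemma lead_0 [simp]: "lead w 0 = 0"
  unfolding lead_def prefix_sum_def by simp

lemma lead_Suc: "lead w (Suc i) = lead w i + (int (fst (w i)) - int (snd (w i)))"
  unfolding lead_def prefix_sum_def by simp

lemma PLA_ge_iff_eventually_less: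
  "PLA_ge A B \<longleftrightarrow> (\<forall>\<^sub>F i in sequentially. prefix_sum B i < prefix_sum A i)"
proof -
  have "PLA_ge A B \<longleftrightarrow> (\<forall>\<^sub>F i in cofinite. prefix_sum B i < prefix_sum A i) \<and>
                        (\<exists>\<^sub>F i in cofinite. prefix_sum B i < prefix_sum A i)"
    unfolding PLA_ge_def eventually_cofinite frequently_cofinite by (simp add: not_less)
  then show ?thesis
    unfolding cofinite_eq_sequentially using eventually_frequently[OF sequentially_bot] by blast
qed

lemma PLA_ge_iff_eventually_lead_pos:
  "PLA_ge (\<lambda>i. fst (w i)) (\<lambda>i. snd (w i)) \<longleftrightarrow> (\<forall>\<^sub>F i in sequentially. lead w i \<ge> 1)"
proof -
  have "1 \<le> int a - int b \<longleftrightarrow> b < a" for a b :: nat by linarith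
  then show ?thesis unfolding PLA_ge_iff_eventually_less lead_def by simp
qed

text \<open>
  The lead \<open>d\<close> is stored as a residue \<open>c \<in> [1 - 2\<mu>, 2\<mu>]\<close> plus a stack
  \<open>1\<^sup>h 0\<close> (worth \<open>+\<mu>h\<close>) or \<open>2\<^sup>h 0\<close> (worth \<open>-\<mu>h\<close>), with \<open>0\<close> as bottom marker.
  A nonempty block forces the sign of \<open>c\<close>, so \<open>c\<close> alone decides whether \<open>d \<ge> 1\<close>.
  Adding \<open>\<Delta>\<close> with \<open>|\<Delta>| \<le> \<mu>\<close> needs at most one push or pop to renormalise.
\<close>

definition counter_update :: "nat \<Rightarrow> int \<Rightarrow> int \<Rightarrow> nat \<Rightarrow> int \<times> nat list" where
  "counter_update \<mu> c \<Delta> Z =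
     (let v = c + \<Delta>; M = int \<mu> in
      if Z = 1 then
        if v > 2*M then (v - M, [1, 1]) else if v < 1 then (v + M, []) else (v, [1])
      else if Z = 2 then
        if v < 1 - 2*M then (v + M, [2, 2]) else if v > 0 then (v - M, []) else (v, [2])
      else
        if v > 2*M then (v - M, [1, 0]) else if v < 1 - 2*M then (v + M, [2, 0]) else (v, [0]))"

definition counter_repr :: "nat \<Rightarrow> int \<Rightarrow> nat list \<Rightarrow> int \<Rightarrow> bool" where
  "counter_repr \<mu> c stk d \<longleftrightarrow> 1 - 2*int \<mu> \<le> c \<and> c \<le> 2*int \<mu> \<and>
     (\<exists>h. stk = replicate h 1 @ [0] \<and> d = c + int \<mu> * int h \<and> (h > 0 \<longrightarrow> c \<ge> 1) \<or>
          stk = replicate h 2 @ [0] \<and> d = c - int \<mu> * int h \<and> (h > 0 \<longrightarrow> c \<le> 0))"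

lemma counter_repr_pos_iff:
  assumes "counter_repr \<mu> c stk d"
  shows "c \<ge> 1 \<longleftrightarrow> d \<ge> 1"
  using assms unfolding counter_repr_def
  by (smt (verit, best) mult_nonneg_nonneg of_nat_0_le_iff of_nat_0_less_iff mult_eq_0_iff)

lemma counter_repr_stack_cases:
  assumes "counter_repr \<mu> c stk d"
  shows "\<exists>Z rest. stk = Z # rest \<and> Z \<in> {0, 1, 2}"
  using assms unfolding counter_repr_def by (auto, (case_tac h; auto)+)

lemma counter_repr_update_bottom:
  assumes "\<mu> \<ge> 1" "1 - 2*int \<mu> \<le> c" "c \<le> 2*int \<mu>" "\<bar>\<Delta>\<bar> \<le> int \<mu>"
  shows "counter_repr \<mu> (fst (counter_update \<mu> c \<Delta> 0)) (snd (counter_update \<mu> c \<Delta> 0)) (c + \<Delta>)"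
  using assms unfolding counter_update_def counter_repr_def Let_def
  by (auto intro: exI[of _ 0] exI[of _ 1])

lemma counter_repr_update_up:
  assumes "\<mu> \<ge> 1" "1 \<le> c" "c \<le> 2*int \<mu>" "\<bar>\<Delta>\<bar> \<le> int \<mu>"
  shows "counter_repr \<mu> (fst (counter_update \<mu> c \<Delta> 1)) (snd (counter_update \<mu> c \<Delta> 1) @ replicate k 1 @ [0])
           (c + int \<mu> * int (Suc k) + \<Delta>)"
proof -
  consider "c + \<Delta> > 2*int \<mu>" | "c + \<Delta> < 1" | "1 \<le> c + \<Delta>" "c + \<Delta> \<le> 2*int \<mu>"
    by linarith
  then show ?thesis
  proof cases
    case 1
    then show ?thesis using assms unfolding counter_update_def counter_repr_def
      by (auto intro!: exI[of _ "Suc (Suc k)"] simp: algebra_simps)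
  next
    case 2
    then show ?thesis using assms unfolding counter_update_def counter_repr_def
      by (auto intro!: exI[of _ k] simp: algebra_simps)
  next
    case 3
    then show ?thesis using assms unfolding counter_update_def counter_repr_def
      by (auto intro!: exI[of _ "Suc k"] simp: algebra_simps)
  qed
qed

lemma counter_repr_update_down:
  assumes "\<mu> \<ge> 1" "1 - 2*int \<mu> \<le> c" "c \<le> 0" "\<bar>\<Delta>\<bar> \<le> int \<mu>"
  shows "counter_repr \<mu> (fst (counter_update \<mu> c \<Delta> 2)) (snd (counter_update \<mu> c \<Delta> 2) @ replicate k 2 @ [0])
           (c - int \<mu> * int (Suc k) + \<Delta>)"
proof -
  consider "c + \<Delta> < 1 - 2*int \<mu>" | "c + \<Delta> > 0" | "1 - 2*int \<mu> \<le> c + \<Delta>" "c + \<Delta> \<le> 0"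
    by linarith
  then show ?thesis
  proof cases
    case 1
    then show ?thesis using assms unfolding counter_update_def counter_repr_def
      by (auto intro!: disjI2 exI[of _ "Suc (Suc k)"] simp: algebra_simps)
  next
    case 2
    then show ?thesis using assms unfolding counter_update_def counter_repr_def
      by (auto intro!: disjI2 exI[of _ k] simp: algebra_simps)
  next
    case 3
    then show ?thesis using assms unfolding counter_update_def counter_repr_def
      by (auto intro!: disjI2 exI[of _ "Suc k"] simp: algebra_simps)
  qed
qed

lemma counter_repr_update:
  assumes "\<mu> \<ge> 1" "counter_repr \<mu> c (Z # rest) d" "\<bar>\<Delta>\<bar> \<le> int \<mu>"
  shows "counter_repr \<mu> (fst (counter_update \<mu> c \<Delta> Z)) (snd (counter_update \<mu> c \<Delta> Z) @ rest) (d + \<Delta>)"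
proof -
  obtain h where range: "1 - 2*int \<mu> \<le> c" "c \<le> 2*int \<mu>" and
    h: "Z # rest = replicate h 1 @ [0] \<and> d = c + int \<mu> * int h \<and> (h > 0 \<longrightarrow> c \<ge> 1) \<or>
        Z # rest = replicate h 2 @ [0] \<and> d = c - int \<mu> * int h \<and> (h > 0 \<longrightarrow> c \<le> 0)"
    using assms(2) unfolding counter_repr_def by blast
  show ?thesis
  proof (cases h)
    case 0
    then have "Z = 0" "rest = []" "d = c" using h by auto
    then show ?thesis using counter_repr_update_bottom[OF assms(1) range assms(3)] by simp
  next
    case (Suc k)
    then have "Z = 1 \<and> rest = replicate k 1 @ [0] \<and> d = c + int \<mu> * int (Suc k) \<and> c \<ge> 1 \<or>
               Z = 2 \<and> rest = replicate k 2 @ [0] \<and> d = c - int \<mu> * int (Suc k) \<and> c \<le> 0"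
      using h by auto
    then show ?thesis
    proof (elim disjE conjE)
      assume "Z = 1" "rest = replicate k 1 @ [0]" "d = c + int \<mu> * int (Suc k)" "c \<ge> 1"
      then show ?thesis using counter_repr_update_up[OF assms(1) \<open>c \<ge> 1\<close> range(2) assms(3), of k]
        by simp
    next
      assume "Z = 2" "rest = replicate k 2 @ [0]" "d = c - int \<mu> * int (Suc k)" "c \<le> 0"
      then show ?thesis using counter_repr_update_down[OF assms(1) range(1) \<open>c \<le> 0\<close> assms(3), of k]
        by simp
    qed
  qed
qed

lemma counter_update_bounds:
  assumes "\<mu> \<ge> 1" "1 - 2*int \<mu> \<le> c" "c \<le> 2*int \<mu>" "\<bar>\<Delta>\<bar> \<le> int \<mu>"
    and "counter_update \<mu> c \<Delta> Z = (c', \<gamma>)"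
  shows "1 - 2*int \<mu> \<le> c'" "c' \<le> 2*int \<mu>" "set \<gamma> \<subseteq> {0, 1, 2}"
  using assms unfolding counter_update_def Let_def by (auto split: if_splits)

fun counter_run :: "nat \<Rightarrow> (nat \<Rightarrow> nat \<times> nat) \<Rightarrow> nat \<Rightarrow> int \<times> nat list" where
  "counter_run \<mu> w 0 = (0, [0])"
| "counter_run \<mu> w (Suc i) =
     (case counter_run \<mu> w i of (c, stk) \<Rightarrow>
        case counter_update \<mu> c (int (fst (w i)) - int (snd (w i))) (hd stk) of (c', \<gamma>) \<Rightarrow>
          (c', \<gamma> @ tl stk))"

lemma counter_repr_counter_run:
  assumes "\<mu> \<ge> 1" and bounded: "\<forall>i. fst (w i) \<le> \<mu> \<and> snd (w i) \<le> \<mu>"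
  shows "counter_repr \<mu> (fst (counter_run \<mu> w i)) (snd (counter_run \<mu> w i)) (lead w i)"
proof (induction i)
  case 0
  show ?case using assms(1) unfolding counter_repr_def by (auto intro!: exI[of _ 0])
next
  case (Suc i)
  obtain c stk where run: "counter_run \<mu> w i = (c, stk)" by (cases "counter_run \<mu> w i")
  obtain Z rest where stk: "stk = Z # rest"
    using counter_repr_stack_cases[of \<mu> c stk "lead w i"] Suc.IH run by auto
  have "\<bar>int (fst (w i)) - int (snd (w i))\<bar> \<le> int \<mu>" using bounded[rule_format, of i] by auto
  with Suc have "counter_repr \<mu> (fst (counter_update \<mu> c (int (fst (w i)) - int (snd (w i))) Z))
      (snd (counter_update \<mu> c (int (fst (w i)) - int (snd (w i))) Z) @ rest) (lead w (Suc i))"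
    unfolding lead_Suc using counter_repr_update[OF assms(1)] run stk by simp
  then show ?case by (simp add: run stk case_prod_beta)
qed

definition state_code :: "nat \<Rightarrow> nat \<Rightarrow> int \<Rightarrow> nat" where
  "state_code \<mu> m c = 2 * nat (c + 2 * int \<mu>) + m"

definition state_counter :: "nat \<Rightarrow> nat \<Rightarrow> int" where
  "state_counter \<mu> q = int (q div 2) - 2 * int \<mu>"

lemma state_counter_state_code [simp]:
  "m < 2 \<Longrightarrow> - 2 * int \<mu> \<le> c \<Longrightarrow> state_counter \<mu> (state_code \<mu> m c) = c"
  unfolding state_code_def state_counter_def by simp

lemma odd_state_code_iff [simp]: "m < 2 \<Longrightarrow> odd (state_code \<mu> m c) \<longleftrightarrow> m = 1"
  unfolding state_code_def by (cases "m = 0") auto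

abbreviation lead_states :: "nat \<Rightarrow> nat set" where
  "lead_states \<mu> \<equiv> {..<8 * \<mu> + 2}"

abbreviation lead_accepting :: "nat \<Rightarrow> nat set" where
  "lead_accepting \<mu> \<equiv> {q \<in> lead_states \<mu>. odd q}"

lemma state_code_in_lead_states: "m < 2 \<Longrightarrow> c \<le> 2 * int \<mu> \<Longrightarrow> state_code \<mu> m c \<in> lead_states \<mu>"
  unfolding state_code_def by simp

text \<open>
  The bit \<open>m\<close> of a state is the guess that the lead has become positive for good:
  it may switch from 0 to 1 once and never back, a move into a state with \<open>m = 1\<close> requires
  a positive residue, and the accepting states are those with \<open>m = 1\<close>.
\<close>

definition lead_pda :: "nat \<Rightarrow> (nat \<times> nat) pda_trans set" where
  "lead_pda \<mu> = {(state_code \<mu> m c, Some (a, b), Z, state_code \<mu> m' c', \<gamma>) | m m' c a b Z c' \<gamma>.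
     m \<le> m' \<and> m' < 2 \<and> 1 - 2 * int \<mu> \<le> c \<and> c \<le> 2 * int \<mu> \<and> a \<le> \<mu> \<and> b \<le> \<mu> \<and> Z \<le> 2 \<and>
     counter_update \<mu> c (int a - int b) Z = (c', \<gamma>) \<and> (m' = 1 \<longrightarrow> c' \<ge> 1)}"

lemma finite_lead_pda: "finite (lead_pda \<mu>)"
proof -
  let ?S = "{..<2::nat} \<times> {..<2::nat} \<times> {1 - 2 * int \<mu>..2 * int \<mu>} \<times> {..\<mu>} \<times> {..\<mu>} \<times> {..2::nat}"
  let ?f = "\<lambda>(m, m', c, a, b, Z). (state_code \<mu> m c, Some (a, b), Z,
             state_code \<mu> m' (fst (counter_update \<mu> c (int a - int b) Z)),
             snd (counter_update \<mu> c (int a - int b) Z))"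
  have "lead_pda \<mu> \<subseteq> ?f ` ?S"
  proof
    fix t assume "t \<in> lead_pda \<mu>"
    then obtain m m' c a b Z c' \<gamma> where t: "t = (state_code \<mu> m c, Some (a, b), Z, state_code \<mu> m' c', \<gamma>)"
      "m \<le> m'" "m' < 2" "1 - 2 * int \<mu> \<le> c" "c \<le> 2 * int \<mu>" "a \<le> \<mu>" "b \<le> \<mu>" "Z \<le> 2"
      "counter_update \<mu> c (int a - int b) Z = (c', \<gamma>)"
      unfolding lead_pda_def by blast
    show "t \<in> ?f ` ?S"
      by (rule image_eqI[where x = "(m, m', c, a, b, Z)"]) (use t in auto)
  qed
  then show ?thesis by (rule finite_subset) simp
qed

lemma lead_pda_wf:
  assumes "\<mu> \<ge> 1"
  shows "pda_wf (lead_states \<mu>) {0, 1, 2} (lead_pda \<mu>) (state_code \<mu> 0 0) 0 (lead_accepting \<mu>)"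
proof -
  have trans: "p \<in> lead_states \<mu> \<and> Z \<in> {0, 1, 2} \<and> q \<in> lead_states \<mu> \<and> set \<gamma> \<subseteq> {0, 1, 2}"
    if "(p, x, Z, q, \<gamma>) \<in> lead_pda \<mu>" for p x Z q \<gamma>
  proof -
    from that obtain m m' c a b c' where t: "p = state_code \<mu> m c" "q = state_code \<mu> m' c'"
      "m \<le> m'" "m' < 2" "1 - 2 * int \<mu> \<le> c" "c \<le> 2 * int \<mu>" "a \<le> \<mu>" "b \<le> \<mu>" "Z \<le> 2"
      "counter_update \<mu> c (int a - int b) Z = (c', \<gamma>)"
      unfolding lead_pda_def by blast
    have "\<bar>int a - int b\<bar> \<le> int \<mu>" using t by auto
    note bounds = counter_update_bounds[OF assms t(5,6) this t(10)]
    show ?thesis using t bounds state_code_in_lead_states by auto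
  qed
  have "\<forall>(p, x, Z, q, \<gamma>) \<in> lead_pda \<mu>.
          p \<in> lead_states \<mu> \<and> Z \<in> {0, 1, 2} \<and> q \<in> lead_states \<mu> \<and> set \<gamma> \<subseteq> {0, 1, 2}"
    by (clarify, rule trans)
  then show ?thesis
    unfolding pda_wf_def using finite_lead_pda state_code_in_lead_states[of 0 0 \<mu>] by auto
qed

lemma lead_pda_step_sound:
  assumes "\<mu> \<ge> 1" and step: "pda_step (lead_pda \<mu>) w (q, stk, n) (q', stk', n')"
    and repr: "counter_repr \<mu> (state_counter \<mu> q) stk d"
  shows "n' = Suc n \<and> fst (w n) \<le> \<mu> \<and> snd (w n) \<le> \<mu> \<and>
         counter_repr \<mu> (state_counter \<mu> q') stk' (d + (int (fst (w n)) - int (snd (w n)))) \<and>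
         (odd q \<longrightarrow> odd q') \<and> (odd q' \<longrightarrow> state_counter \<mu> q' \<ge> 1)"
proof -
  have no_eps: "(q, None, Z, q', \<gamma>) \<notin> lead_pda \<mu>" for Z \<gamma>
    unfolding lead_pda_def by blast
  obtain Z rest \<gamma> where stk: "stk = Z # rest" "stk' = \<gamma> @ rest" and n': "n' = Suc n"
    and t: "(q, Some (w n), Z, q', \<gamma>) \<in> lead_pda \<mu>"
    using step no_eps unfolding pda_step_def by auto
  obtain a b where ab: "w n = (a, b)" by fastforce
  obtain m m' c c' where q: "q = state_code \<mu> m c" "q' = state_code \<mu> m' c'"
    and t': "m \<le> m'" "m' < 2" "1 - 2 * int \<mu> \<le> c" "fst (w n) \<le> \<mu>" "snd (w n) \<le> \<mu>"
      "counter_update \<mu> c (int (fst (w n)) - int (snd (w n))) Z = (c', \<gamma>)" "m' = 1 \<longrightarrow> c' \<ge> 1"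
    using t unfolding lead_pda_def ab by auto
  have counter_q: "state_counter \<mu> q = c" using q t' by simp
  have "\<bar>int (fst (w n)) - int (snd (w n))\<bar> \<le> int \<mu>" using t' by auto
  from counter_repr_update[OF assms(1) repr[unfolded counter_q stk(1)] this] t'(6)
  have repr': "counter_repr \<mu> c' stk' (d + (int (fst (w n)) - int (snd (w n))))"
    using stk by simp
  then have "state_counter \<mu> q' = c'" using q t' unfolding counter_repr_def by simp
  then show ?thesis using n' t' q repr' by auto
qed

lemma lead_pda_step_complete:
  assumes "\<mu> \<ge> 1" "counter_repr \<mu> c (Z # rest) d" "fst (w n) \<le> \<mu>" "snd (w n) \<le> \<mu>"
    "m \<le> m'" "m' < 2" "counter_update \<mu> c (int (fst (w n)) - int (snd (w n))) Z = (c', \<gamma>)"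
    "m' = 1 \<longrightarrow> c' \<ge> 1"
  shows "pda_step (lead_pda \<mu>) w (state_code \<mu> m c, Z # rest, n) (state_code \<mu> m' c', \<gamma> @ rest, Suc n)"
proof -
  have "Z \<le> 2" using counter_repr_stack_cases[OF assms(2)] by auto
  moreover have "1 - 2 * int \<mu> \<le> c" "c \<le> 2 * int \<mu>" using assms(2) unfolding counter_repr_def by auto
  ultimately have "(state_code \<mu> m c, Some (w n), Z, state_code \<mu> m' c', \<gamma>) \<in> lead_pda \<mu>"
    using assms unfolding lead_pda_def by (cases "w n") fastforce
  then show ?thesis unfolding pda_step_def by auto
qed

lemma lead_pda_complete:
  assumes "\<mu> \<ge> 1" and bounded: "\<forall>i. fst (w i) \<le> \<mu> \<and> snd (w i) \<le> \<mu>"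
    and "\<forall>\<^sub>F i in sequentially. lead w i \<ge> 1"
  shows "pda_buchi_accepts (lead_pda \<mu>) (state_code \<mu> 0 0) 0 (lead_accepting \<mu>) w"
proof -
  obtain k where k: "\<And>i. i \<ge> k \<Longrightarrow> lead w i \<ge> 1"
    using assms(3) unfolding eventually_sequentially by blast
  define mode :: "nat \<Rightarrow> nat" where "mode i = of_bool (k < i)" for i
  define r where "r i = (state_code \<mu> (mode i) (fst (counter_run \<mu> w i)), snd (counter_run \<mu> w i), i)" for i
  note repr = counter_repr_counter_run[OF assms(1) bounded]
  have "pda_step (lead_pda \<mu>) w (r i) (r (Suc i))" for i
  proof -
    obtain c stk where run: "counter_run \<mu> w i = (c, stk)" by (cases "counter_run \<mu> w i")
    obtain Z rest where stk: "stk = Z # rest"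
      using counter_repr_stack_cases[of \<mu> c stk "lead w i"] repr[of i] run by auto
    obtain c' \<gamma> where upd: "counter_update \<mu> c (int (fst (w i)) - int (snd (w i))) Z = (c', \<gamma>)"
      by (cases "counter_update \<mu> c (int (fst (w i)) - int (snd (w i))) Z")
    have run': "counter_run \<mu> w (Suc i) = (c', \<gamma> @ rest)" using run stk upd by simp
    have pos: "mode (Suc i) = 1 \<longrightarrow> c' \<ge> 1"
      using counter_repr_pos_iff[OF repr[of "Suc i"]] k[of "Suc i"] run' by (simp add: mode_def)
    have "pda_step (lead_pda \<mu>) w (state_code \<mu> (mode i) c, Z # rest, i)
                 (state_code \<mu> (mode (Suc i)) c', \<gamma> @ rest, Suc i)"
      by (rule lead_pda_step_complete[where w = w and n = i, OF assms(1) _ _ _ _ _ upd pos])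
        (use repr[of i] bounded run stk in \<open>auto simp: mode_def\<close>)
    then show ?thesis using run run' stk by (simp add: r_def)
  qed
  moreover have "\<forall>\<^sub>F i in sequentially. fst (r i) \<in> lead_accepting \<mu>"
  proof (rule eventually_sequentiallyI[of "Suc k"])
    fix i assume "Suc k \<le> i"
    moreover have "fst (counter_run \<mu> w i) \<le> 2 * int \<mu>" using repr[of i] unfolding counter_repr_def by simp
    ultimately show "fst (r i) \<in> lead_accepting \<mu>"
      using state_code_in_lead_states by (simp add: r_def mode_def)
  qed
  then have "infinite {i. fst (r i) \<in> lead_accepting \<mu>}"
    using eventually_frequently[OF sequentially_bot]
    unfolding cofinite_eq_sequentially[symmetric] frequently_cofinite by blast
  ultimately show ?thesis
    unfolding pda_buchi_accepts_def by (intro exI[of _ r]) (auto simp: r_def mode_def)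
qed

lemma lead_pda_run_tracks_lead:
  assumes "\<mu> \<ge> 1" and r0: "r 0 = (state_code \<mu> 0 0, [0], 0)"
    and steps: "\<forall>i. pda_step (lead_pda \<mu>) w (r i) (r (Suc i))"
  shows "snd (snd (r i)) = i \<and> counter_repr \<mu> (state_counter \<mu> (fst (r i))) (fst (snd (r i))) (lead w i)"
proof (induction i)
  case 0
  show ?case using assms(1) r0 unfolding counter_repr_def by (auto intro!: exI[of _ 0])
next
  case (Suc i)
  obtain q stk n where ri: "r i = (q, stk, n)" by (cases "r i")
  obtain q' stk' n' where rs: "r (Suc i) = (q', stk', n')" by (cases "r (Suc i)")
  from Suc ri have "counter_repr \<mu> (state_counter \<mu> q) stk (lead w i)" "n = i" by simp_all
  from lead_pda_step_sound[OF assms(1) steps[rule_format, of i, unfolded ri rs] this(1)] this(2)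
  show ?case by (simp add: rs lead_Suc)
qed

lemma lead_pda_sound:
  assumes "\<mu> \<ge> 1"
    and "pda_buchi_accepts (lead_pda \<mu>) (state_code \<mu> 0 0) 0 (lead_accepting \<mu>) w"
  shows "(\<forall>i. fst (w i) \<le> \<mu> \<and> snd (w i) \<le> \<mu>) \<and> (\<forall>\<^sub>F i in sequentially. lead w i \<ge> 1)"
proof -
  obtain r where r0: "r 0 = (state_code \<mu> 0 0, [0], 0)"
    and steps: "\<forall>i. pda_step (lead_pda \<mu>) w (r i) (r (Suc i))"
    and accepting: "infinite {i. fst (r i) \<in> lead_accepting \<mu>}"
    using assms(2) unfolding pda_buchi_accepts_def by blast
  have step: "fst (w i) \<le> \<mu> \<and> snd (w i) \<le> \<mu> \<and> (odd (fst (r i)) \<longrightarrow> odd (fst (r (Suc i)))) \<and>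
              (odd (fst (r (Suc i))) \<longrightarrow> lead w (Suc i) \<ge> 1)" for i
  proof -
    obtain q stk n where ri: "r i = (q, stk, n)" by (cases "r i")
    obtain q' stk' n' where rs: "r (Suc i) = (q', stk', n')" by (cases "r (Suc i)")
    note tracks = lead_pda_run_tracks_lead[OF assms(1) r0 steps]
    from tracks[of i] ri have "counter_repr \<mu> (state_counter \<mu> q) stk (lead w i)" "n = i" by simp_all
    from lead_pda_step_sound[OF assms(1) steps[rule_format, of i, unfolded ri rs] this(1)] this(2)
    show ?thesis using counter_repr_pos_iff[OF tracks[of "Suc i", THEN conjunct2]] by (simp add: ri rs)
  qed
  obtain i0 where i0: "odd (fst (r i0))"
    using not_finite_existsD[OF accepting] by blast
  have odd_from_i0: "odd (fst (r (i0 + j)))" for j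
  proof (induction j)
    case 0
    show ?case using i0 by simp
  next
    case (Suc j)
    then show ?case using step[of "i0 + j"] by simp
  qed
  have "\<forall>\<^sub>F i in sequentially. lead w i \<ge> 1"
  proof (rule eventually_sequentiallyI[of "Suc i0"])
    fix i assume "Suc i0 \<le> i"
    then obtain j where "i = Suc (i0 + j)" using le_Suc_ex by force
    then show "lead w i \<ge> 1" using step[of "i0 + j"] odd_from_i0[of j] by simp
  qed
  then show ?thesis using step by blast
qed

lemma lead_pda_language:
  assumes "\<mu> \<ge> 1"
  shows "{w. pda_buchi_accepts (lead_pda \<mu>) (state_code \<mu> 0 0) 0 (lead_accepting \<mu>) w} =
         {w. (\<forall>i. fst (w i) \<le> \<mu> \<and> snd (w i) \<le> \<mu>) \<and> (\<forall>\<^sub>F i in sequentially. lead w i \<ge> 1)}"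
  using lead_pda_complete[OF assms] lead_pda_sound[OF assms] by blast

theorem theorem20:
  fixes \<mu> :: nat
  assumes "\<mu> \<ge> 1"
  shows "omega_context_free
           {w :: nat \<Rightarrow> nat \<times> nat.
              (\<forall>i. fst (w i) \<le> \<mu> \<and> snd (w i) \<le> \<mu>) \<and>
              PLA_ge (\<lambda>i. fst (w i)) (\<lambda>i. snd (w i))}"
proof -
  have "{w :: nat \<Rightarrow> nat \<times> nat. (\<forall>i. fst (w i) \<le> \<mu> \<and> snd (w i) \<le> \<mu>) \<and>
                PLA_ge (\<lambda>i. fst (w i)) (\<lambda>i. snd (w i))} =
             {w. pda_buchi_accepts (lead_pda \<mu>) (state_code \<mu> 0 0) 0 (lead_accepting \<mu>) w}"
    unfolding lead_pda_language[OF assms] PLA_ge_iff_eventually_lead_pos ..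
  then show ?thesis
    unfolding omega_context_free_def using lead_pda_wf[OF assms] by blast
qed

end
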